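(* Let $X$ be a compact Hausdorff space, $\mathcal C=C(X)$ with the supremum norm, $\alpha\colon X\to X$ continuous, $\delta f=f\circ\alpha$, and $A$ a transfer operator for $(\mathcal C,\delta)$. Then for every $\varphi\in\mathcal C$ and every $\mu\in M_\delta(\mathcal C)$, \[ \lambda(\varphi)\ge \mu[\varphi]+\tau(\mu). \]
   Context: A transfer operator for $(\mathcal C,\delta)$ is a positive linear operator $A\colon\mathcal C\to\mathcal C$ with $A((\delta f)g)=f\,Ag$ for all $f,g\in\mathcal C$. $A_\varphi f=A(e^\varphi f)$ and $\lambda(\varphi)=\lim_{n\to\infty}\frac1n\ln\|A_\varphi^n\mathbf 1\|$ ($\mathbf 1$ the constant function $1$). $M(\mathcal C)$ is the set of positive linear functionals $m$ on $\mathcal C$ with $m[\mathbf 1]=1$; $M_\delta(\mathcal C)$ those with additionally $\mu[\delta f]=\mu[f]$ for all $f$. A partition of unity is a finite set $D$ of nonnegative elements of $\mathcal C$ summing to $\mathbf 1$. For $\mu\in M_\delta(\mathcal C)$: $\tau_n(\mu,D)=\sup_{m\in M(\mathcal C)}\sum_{g\in D}\mu[g]\ln\frac{m[A^ng]}{\mu[g]}$, $\tau_n(\mu)=\inf_D\tau_n(\mu,D)$ over all partitions of unity, $\tau(\mu)=\inf_{n\in\mathbb N}\tau_n(\mu)/n$; summands with $\mu[g]=0$ are set to $0$, $\ln0=-\infty$, and if some $g\in D$ has $A^ng=0$ and $\mu[g]>0$ then $\tau(\mu)=-\infty$. *)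

theory Defs
  imports "HOL-Analysis.Analysis"
begin

text \<open>The space X is a (nonempty) compact Hausdorff topological space, modelled as a type
 'a of class t2_space with UNIV compact. C(X) is the set of continuous real functions.\<close>

definition CX :: "('a::topological_space \<Rightarrow> real) set" where
  "CX = {f. continuous_on UNIV f}"

definition sup_norm :: "('a \<Rightarrow> real) \<Rightarrow> real" where
  "sup_norm f = (SUP x. \<bar>f x\<bar>)"

definition one_fun :: "'a \<Rightarrow> real" where
  "one_fun = (\<lambda>_. 1)"

definition pos_lin_op :: "(('a::topological_space \<Rightarrow> real) \<Rightarrow> ('a \<Rightarrow> real)) \<Rightarrow> bool" where
  "pos_lin_op A \<longleftrightarrow>
     (\<forall>f\<in>CX. A f \<in> CX) \<and>
     (\<forall>f\<in>CX. \<forall>g\<in>CX. A (\<lambda>x. f x + g x) = (\<lambda>x. A f x + A g x)) \<and>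
     (\<forall>f\<in>CX. \<forall>c::real. A (\<lambda>x. c * f x) = (\<lambda>x. c * A f x)) \<and>
     (\<forall>f\<in>CX. (\<forall>x. f x \<ge> 0) \<longrightarrow> (\<forall>x. A f x \<ge> 0))"

definition transfer_op :: "('a::topological_space \<Rightarrow> 'a) \<Rightarrow> (('a \<Rightarrow> real) \<Rightarrow> ('a \<Rightarrow> real)) \<Rightarrow> bool" where
  "transfer_op \<alpha> A \<longleftrightarrow> pos_lin_op A \<and>
     (\<forall>f\<in>CX. \<forall>g\<in>CX. A (\<lambda>x. f (\<alpha> x) * g x) = (\<lambda>x. f x * A g x))"

definition A_phi :: "(('a \<Rightarrow> real) \<Rightarrow> ('a \<Rightarrow> real)) \<Rightarrow> ('a \<Rightarrow> real) \<Rightarrow> ('a \<Rightarrow> real) \<Rightarrow> ('a \<Rightarrow> real)" where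
  "A_phi A \<phi> f = A (\<lambda>x. exp (\<phi> x) * f x)"

definition lnE :: "real \<Rightarrow> ereal" where
  "lnE x = (if x > 0 then ereal (ln x) else -\<infinity>)"

definition press :: "(('a \<Rightarrow> real) \<Rightarrow> ('a \<Rightarrow> real)) \<Rightarrow> ('a \<Rightarrow> real) \<Rightarrow> ereal" where
  "press A \<phi> = lim (\<lambda>n. lnE (sup_norm ((A_phi A \<phi> ^^ n) one_fun)) / ereal (real n))"

definition states :: "(('a::topological_space \<Rightarrow> real) \<Rightarrow> real) set" where
  "states = {m. (\<forall>f\<in>CX. \<forall>g\<in>CX. m (\<lambda>x. f x + g x) = m f + m g) \<and>
               (\<forall>f\<in>CX. \<forall>c::real. m (\<lambda>x. c * f x) = c * m f) \<and>
               (\<forall>f\<in>CX. (\<forall>x. f x \<ge> 0) \<longrightarrow> m f \<ge> 0) \<and>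
               m one_fun = 1}"

definition inv_states :: "('a::topological_space \<Rightarrow> 'a) \<Rightarrow> (('a \<Rightarrow> real) \<Rightarrow> real) set" where
  "inv_states \<alpha> = {\<mu>\<in>states. \<forall>f\<in>CX. \<mu> (\<lambda>x. f (\<alpha> x)) = \<mu> f}"

definition partitions_of_unity :: "('a::topological_space \<Rightarrow> real) set set" where
  "partitions_of_unity = {D. finite D \<and> D \<subseteq> CX \<and> (\<forall>g\<in>D. \<forall>x. g x \<ge> 0) \<and>
                              (\<forall>x. (\<Sum>g\<in>D. g x) = 1)}"

definition tau_nD :: "(('a::topological_space \<Rightarrow> real) \<Rightarrow> ('a \<Rightarrow> real)) \<Rightarrow> nat \<Rightarrow> (('a \<Rightarrow> real) \<Rightarrow> real)
     \<Rightarrow> ('a \<Rightarrow> real) set \<Rightarrow> ereal" where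
  "tau_nD A n \<mu> D = (SUP m\<in>states. \<Sum>g\<in>D.
       (if \<mu> g = 0 then 0 else ereal (\<mu> g) * lnE (m ((A ^^ n) g) / \<mu> g)))"

definition tau_n :: "(('a::topological_space \<Rightarrow> real) \<Rightarrow> ('a \<Rightarrow> real)) \<Rightarrow> nat \<Rightarrow> (('a \<Rightarrow> real) \<Rightarrow> real) \<Rightarrow> ereal" where
  "tau_n A n \<mu> = (INF D\<in>partitions_of_unity. tau_nD A n \<mu> D)"

definition tau :: "(('a::topological_space \<Rightarrow> real) \<Rightarrow> ('a \<Rightarrow> real)) \<Rightarrow> (('a \<Rightarrow> real) \<Rightarrow> real) \<Rightarrow> ereal" where
  "tau A \<mu> = (INF n\<in>{1..}. tau_n A n \<mu> / ereal (real n))"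

end

theory Submission
  imports Defs
begin

text \<open>Let \<open>S\<^sub>N\<close> be the \<open>N\<close>-th Birkhoff sum of \<open>\<phi>\<close>. The transfer identity gives
  \<open>A\<^sub>\<phi>\<^sup>N f = A\<^sup>N (exp S\<^sub>N \<cdot> f)\<close>. Choose a partition of unity \<open>D\<close> so fine that \<open>S\<^sub>N\<close> stays
  within \<open>\<delta>\<close> of a constant \<open>c\<^sub>g\<close> on the support of each \<open>g \<in> D\<close>. Then for every state \<open>m\<close>
  we have \<open>\<parallel>A\<^sub>\<phi>\<^sup>N 1\<parallel> \<ge> m[A\<^sup>N (exp S\<^sub>N)] \<ge> \<Sum>\<^sub>g exp (c\<^sub>g - \<delta>) m[A\<^sup>N g]\<close>, while the invariance
  of \<open>\<mu>\<close> gives \<open>N \<mu>[\<phi>] = \<mu>[S\<^sub>N] \<le> \<Sum>\<^sub>g (c\<^sub>g + \<delta>) \<mu>[g]\<close>. Gibbs' inequality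
  \<open>\<Sum>\<^sub>g w\<^sub>g ln (u\<^sub>g / w\<^sub>g) \<le> ln (\<Sum>\<^sub>g u\<^sub>g)\<close> for probability weights \<open>w\<close> combines the two
  estimates into \<open>N \<mu>[\<phi>] + \<tau>\<^sub>N(\<mu>) \<le> ln \<parallel>A\<^sub>\<phi>\<^sup>N 1\<parallel> + 2\<delta>\<close>. Dividing by \<open>N\<close> bounds every
  term of the sequence defining \<open>\<lambda>(\<phi>)\<close>, and this sequence converges by Fekete's lemma because
  the norms \<open>\<parallel>A\<^sub>\<phi>\<^sup>n 1\<parallel>\<close> are submultiplicative.\<close>

lemma CX_const [simp]: "(\<lambda>x. c) \<in> CX"
  by (simp add: CX_def)

lemma CX_one [simp]: "one_fun \<in> CX"
  by (simp add: CX_def one_fun_def)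

lemma CX_mult: "f \<in> CX \<Longrightarrow> g \<in> CX \<Longrightarrow> (\<lambda>x. f x * g x) \<in> CX"
  by (auto simp: CX_def intro!: continuous_intros)

lemma CX_cmult: "f \<in> CX \<Longrightarrow> (\<lambda>x. c * f x) \<in> CX"
  by (auto simp: CX_def intro!: continuous_intros)

lemma CX_exp: "f \<in> CX \<Longrightarrow> (\<lambda>x. exp (f x)) \<in> CX"
  by (auto simp: CX_def intro!: continuous_intros)

lemma CX_sum: "finite D \<Longrightarrow> (\<And>g. g \<in> D \<Longrightarrow> F g \<in> CX) \<Longrightarrow> (\<lambda>x. \<Sum>g\<in>D. F g x) \<in> CX"
  by (auto simp: CX_def intro!: continuous_intros)

lemma continuous_on_funpow:
  fixes \<alpha> :: "'a::topological_space \<Rightarrow> 'a"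
  assumes "continuous_on UNIV \<alpha>"
  shows "continuous_on UNIV (\<alpha> ^^ n)"
proof (induction n)
  case 0
  then show ?case by (simp add: id_def continuous_on_id)
next
  case (Suc n)
  then show ?case
    using continuous_on_compose[OF Suc.IH continuous_on_subset[OF assms subset_UNIV]] by simp
qed

lemma CX_comp_funpow:
  fixes \<alpha> :: "'a::topological_space \<Rightarrow> 'a"
  assumes "f \<in> CX" "continuous_on UNIV \<alpha>"
  shows "(\<lambda>x. f ((\<alpha> ^^ n) x)) \<in> CX"
  using assms continuous_on_compose[OF continuous_on_funpow[OF assms(2), of n], of f]
  by (auto simp: CX_def o_def intro: continuous_on_subset)

subsection \<open>Positive linear functionals and operators\<close>

definition pos_lin_fun :: "(('a::topological_space \<Rightarrow> real) \<Rightarrow> real) \<Rightarrow> bool" where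
  "pos_lin_fun \<psi> \<longleftrightarrow>
     (\<forall>f\<in>CX. \<forall>g\<in>CX. \<psi> (\<lambda>x. f x + g x) = \<psi> f + \<psi> g) \<and>
     (\<forall>f\<in>CX. \<forall>c::real. \<psi> (\<lambda>x. c * f x) = c * \<psi> f) \<and>
     (\<forall>f\<in>CX. (\<forall>x. f x \<ge> 0) \<longrightarrow> \<psi> f \<ge> 0)"

lemma pos_lin_fun_add: "pos_lin_fun \<psi> \<Longrightarrow> f \<in> CX \<Longrightarrow> g \<in> CX \<Longrightarrow> \<psi> (\<lambda>x. f x + g x) = \<psi> f + \<psi> g"
  by (simp add: pos_lin_fun_def)

lemma pos_lin_fun_cmult: "pos_lin_fun \<psi> \<Longrightarrow> f \<in> CX \<Longrightarrow> \<psi> (\<lambda>x. c * f x) = c * \<psi> f"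
  by (simp add: pos_lin_fun_def)

lemma pos_lin_fun_nonneg: "pos_lin_fun \<psi> \<Longrightarrow> f \<in> CX \<Longrightarrow> (\<And>x. f x \<ge> 0) \<Longrightarrow> \<psi> f \<ge> 0"
  by (simp add: pos_lin_fun_def)

lemma pos_lin_fun_minus: "pos_lin_fun \<psi> \<Longrightarrow> f \<in> CX \<Longrightarrow> \<psi> (\<lambda>x. - f x) = - \<psi> f"
  using pos_lin_fun_cmult[of \<psi> f "-1"] by simp

lemma pos_lin_fun_sum:
  assumes "pos_lin_fun \<psi>" "finite D" "\<And>g. g \<in> D \<Longrightarrow> F g \<in> CX"
  shows "\<psi> (\<lambda>x. \<Sum>g\<in>D. F g x) = (\<Sum>g\<in>D. \<psi> (F g))"
  using assms(2,3)
proof (induction D rule: finite_induct)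
  case empty
  then show ?case using pos_lin_fun_cmult[OF assms(1) CX_const, of 0 0] by simp
next
  case (insert a D)
  then show ?case by (simp add: pos_lin_fun_add[OF assms(1)] CX_sum)
qed

lemma pos_lin_fun_mono:
  assumes "pos_lin_fun \<psi>" "f \<in> CX" "g \<in> CX" "\<And>x. f x \<le> g x"
  shows "\<psi> f \<le> \<psi> g"
proof -
  have "(\<lambda>x. - f x) \<in> CX" using CX_cmult[OF assms(2), of "-1"] by simp
  then have "\<psi> (\<lambda>x. g x + - f x) = \<psi> g + \<psi> (\<lambda>x. - f x)"
    by (rule pos_lin_fun_add[OF assms(1,3)])
  then have "\<psi> (\<lambda>x. g x + - f x) = \<psi> g - \<psi> f"
    by (simp add: pos_lin_fun_minus[OF assms(1,2)])
  moreover have "\<psi> (\<lambda>x. g x + - f x) \<ge> 0"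
    using assms(2-4) by (intro pos_lin_fun_nonneg[OF assms(1)]) (auto simp: CX_def intro!: continuous_intros)
  ultimately show ?thesis by linarith
qed

lemma states_pos_lin_fun: "m \<in> states \<Longrightarrow> pos_lin_fun m"
  by (simp add: states_def pos_lin_fun_def)

lemma inv_states_pos_lin_fun: "\<mu> \<in> inv_states \<alpha> \<Longrightarrow> pos_lin_fun \<mu>"
  by (simp add: inv_states_def states_pos_lin_fun)

lemma pos_lin_op_CX: "pos_lin_op B \<Longrightarrow> f \<in> CX \<Longrightarrow> B f \<in> CX"
  by (simp add: pos_lin_op_def)

lemma pos_lin_op_cmult: "pos_lin_op B \<Longrightarrow> f \<in> CX \<Longrightarrow> B (\<lambda>x. c * f x) = (\<lambda>x. c * B f x)"
  by (simp add: pos_lin_op_def)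

lemma pos_lin_op_nonneg: "pos_lin_op B \<Longrightarrow> f \<in> CX \<Longrightarrow> (\<And>x. f x \<ge> 0) \<Longrightarrow> B f x \<ge> 0"
  by (simp add: pos_lin_op_def)

lemma pos_lin_fun_comp_pos_lin_op: "pos_lin_op B \<Longrightarrow> pos_lin_fun \<psi> \<Longrightarrow> pos_lin_fun (\<lambda>f. \<psi> (B f))"
  by (auto simp: pos_lin_fun_def pos_lin_op_def)

lemma pos_lin_fun_eval: "pos_lin_op B \<Longrightarrow> pos_lin_fun (\<lambda>f. B f x)"
  by (auto simp: pos_lin_fun_def pos_lin_op_def)

lemma pos_lin_op_mono:
  "pos_lin_op B \<Longrightarrow> f \<in> CX \<Longrightarrow> g \<in> CX \<Longrightarrow> (\<And>x. f x \<le> g x) \<Longrightarrow> B f x \<le> B g x"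
  using pos_lin_fun_mono[OF pos_lin_fun_eval] by blast

lemma pos_lin_op_funpow: "pos_lin_op B \<Longrightarrow> pos_lin_op (B ^^ n)"
  by (induction n) (auto simp: pos_lin_op_def)

lemma transfer_op_pos_lin_op: "transfer_op \<alpha> A \<Longrightarrow> pos_lin_op A"
  by (simp add: transfer_op_def)

lemma pos_lin_op_A_phi:
  assumes "pos_lin_op A" "\<phi> \<in> CX"
  shows "pos_lin_op (A_phi A \<phi>)"
proof -
  have e: "(\<lambda>x. exp (\<phi> x)) \<in> CX" using assms(2) by (rule CX_exp)
  have "A_phi A \<phi> (\<lambda>x. f x + g x) = (\<lambda>x. A_phi A \<phi> f x + A_phi A \<phi> g x)"
    if "f \<in> CX" "g \<in> CX" for f g
    using assms(1) that e unfolding A_phi_def pos_lin_op_def by (simp add: distrib_left CX_mult)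
  moreover have "A_phi A \<phi> (\<lambda>x. c * f x) = (\<lambda>x. c * A_phi A \<phi> f x)" if "f \<in> CX" for f c
    using pos_lin_op_cmult[OF assms(1) CX_mult[OF e that], of c]
    unfolding A_phi_def by (simp add: mult.left_commute)
  ultimately show ?thesis
    using assms(1) e unfolding pos_lin_op_def A_phi_def by (simp add: CX_mult)
qed

subsection \<open>Supremum norm on a compact space\<close>

lemma sup_norm_upper:
  assumes "compact (UNIV :: 'a::topological_space set)" "f \<in> CX"
  shows "\<bar>f (x :: 'a)\<bar> \<le> sup_norm f"
proof -
  have "continuous_on UNIV (\<lambda>x. \<bar>f x\<bar>)"
    using assms(2) by (auto simp: CX_def intro!: continuous_intros)
  then have "compact (range (\<lambda>x. \<bar>f x\<bar>))" using assms(1) by (rule compact_continuous_image)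
  then have "bdd_above (range (\<lambda>x. \<bar>f x\<bar>))" by (intro bounded_imp_bdd_above compact_imp_bounded)
  then show ?thesis unfolding sup_norm_def by (rule cSUP_upper[OF UNIV_I])
qed

lemma sup_norm_least: "(\<And>x. \<bar>f x\<bar> \<le> c) \<Longrightarrow> sup_norm f \<le> c"
  unfolding sup_norm_def by (rule cSUP_least) auto

lemma state_le_sup_norm:
  assumes "compact (UNIV :: 'a::topological_space set)" "f \<in> CX" "m \<in> states"
  shows "m (f :: 'a \<Rightarrow> real) \<le> sup_norm f"
proof -
  have "m f \<le> m (\<lambda>x. sup_norm f * one_fun x)"
    using order_trans[OF abs_ge_self sup_norm_upper[OF assms(1,2)]]
    by (intro pos_lin_fun_mono[OF states_pos_lin_fun[OF assms(3)] assms(2) CX_cmult[OF CX_one]])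
      (auto simp: one_fun_def)
  also have "\<dots> = sup_norm f"
    using assms(3) by (simp add: pos_lin_fun_cmult[OF states_pos_lin_fun[OF assms(3)]] states_def)
  finally show ?thesis .
qed

lemma sup_norm_funpow_submult:
  fixes B :: "('a::topological_space \<Rightarrow> real) \<Rightarrow> ('a \<Rightarrow> real)"
  assumes "compact (UNIV :: 'a::topological_space set)" "pos_lin_op B"
  shows "sup_norm ((B ^^ (n + k)) one_fun) \<le> sup_norm ((B ^^ n) one_fun) * sup_norm ((B ^^ k) one_fun)"
    (is "sup_norm (?F (n + k)) \<le> ?a n * ?a k")
proof (rule sup_norm_least)
  fix x :: 'a
  have pos: "pos_lin_op (B ^^ j)" for j by (rule pos_lin_op_funpow[OF assms(2)])
  have CX: "?F j \<in> CX" for j by (rule pos_lin_op_CX[OF pos CX_one])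
  have nonneg: "0 \<le> ?F j y" for j y by (rule pos_lin_op_nonneg[OF pos CX_one]) (simp add: one_fun_def)
  have "?F (n + k) x = (B ^^ n) (?F k) x" by (simp add: funpow_add)
  also have "\<dots> \<le> (B ^^ n) (\<lambda>y. ?a k * one_fun y) x"
    using order_trans[OF abs_ge_self sup_norm_upper[OF assms(1) CX, of k]]
    by (intro pos_lin_op_mono[OF pos CX CX_cmult[OF CX_one]]) (auto simp: one_fun_def)
  also have "\<dots> = ?a k * ?F n x" by (simp add: pos_lin_op_cmult[OF pos CX_one])
  also have "\<dots> \<le> ?a k * ?a n"
    using sup_norm_upper[OF assms(1) CX, of n x] sup_norm_upper[OF assms(1) CX, of k x] nonneg[of n x]
    by (intro mult_left_mono) auto
  finally show "\<bar>?F (n + k) x\<bar> \<le> ?a n * ?a k" by (simp add: nonneg mult.commute)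
qed

subsection \<open>Iterates of the transfer operator\<close>

definition birkhoff_sum :: "('a \<Rightarrow> 'a) \<Rightarrow> ('a \<Rightarrow> real) \<Rightarrow> nat \<Rightarrow> 'a \<Rightarrow> real" where
  "birkhoff_sum \<alpha> \<phi> n x = (\<Sum>k<n. \<phi> ((\<alpha> ^^ k) x))"

lemma CX_birkhoff_sum:
  fixes \<alpha> :: "'a::topological_space \<Rightarrow> 'a"
  assumes "\<phi> \<in> CX" "continuous_on UNIV \<alpha>"
  shows "birkhoff_sum \<alpha> \<phi> n \<in> CX"
  unfolding birkhoff_sum_def by (intro CX_sum CX_comp_funpow[OF assms]) simp

lemma transfer_op_funpow:
  assumes "transfer_op \<alpha> A" "continuous_on UNIV \<alpha>" "u \<in> CX" "h \<in> CX"
  shows "(A ^^ n) (\<lambda>y. u ((\<alpha> ^^ n) y) * h y) = (\<lambda>x. u x * (A ^^ n) h x)"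
  using assms(3)
proof (induction n arbitrary: u)
  case 0
  then show ?case by simp
next
  case (Suc n)
  have "(A ^^ Suc n) (\<lambda>y. u ((\<alpha> ^^ Suc n) y) * h y) = A (\<lambda>x. u (\<alpha> x) * (A ^^ n) h x)"
    using Suc.IH[OF CX_comp_funpow[OF Suc.prems assms(2), of 1]] by (simp add: funpow_swap1)
  also have "\<dots> = (\<lambda>x. u x * A ((A ^^ n) h) x)"
    using assms(1) Suc.prems pos_lin_op_CX[OF pos_lin_op_funpow[OF transfer_op_pos_lin_op] assms(4)]
    unfolding transfer_op_def by blast
  finally show ?case by simp
qed

lemma A_phi_funpow:
  assumes "transfer_op \<alpha> A" "continuous_on UNIV \<alpha>" "\<phi> \<in> CX" "f \<in> CX"
  shows "(A_phi A \<phi> ^^ n) f = (A ^^ n) (\<lambda>x. exp (birkhoff_sum \<alpha> \<phi> n x) * f x)"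
proof (induction n)
  case 0
  then show ?case by (simp add: birkhoff_sum_def)
next
  case (Suc n)
  have "(A_phi A \<phi> ^^ Suc n) f = A (\<lambda>x. exp (\<phi> x) * (A ^^ n) (\<lambda>x. exp (birkhoff_sum \<alpha> \<phi> n x) * f x) x)"
    by (simp add: Suc.IH A_phi_def)
  also have "(\<lambda>x. exp (\<phi> x) * (A ^^ n) (\<lambda>x. exp (birkhoff_sum \<alpha> \<phi> n x) * f x) x)
      = (A ^^ n) (\<lambda>y. exp (\<phi> ((\<alpha> ^^ n) y)) * (exp (birkhoff_sum \<alpha> \<phi> n y) * f y))"
    using assms by (intro transfer_op_funpow[symmetric] CX_mult CX_exp CX_birkhoff_sum)
  also have "(\<lambda>y. exp (\<phi> ((\<alpha> ^^ n) y)) * (exp (birkhoff_sum \<alpha> \<phi> n y) * f y))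
      = (\<lambda>y. exp (birkhoff_sum \<alpha> \<phi> (Suc n) y) * f y)"
    by (simp add: birkhoff_sum_def exp_add algebra_simps)
  finally show ?case by simp
qed

lemma inv_state_birkhoff_sum:
  fixes \<alpha> :: "'a::topological_space \<Rightarrow> 'a"
  assumes "\<mu> \<in> inv_states \<alpha>" "continuous_on UNIV \<alpha>" "\<phi> \<in> CX"
  shows "\<mu> (birkhoff_sum \<alpha> \<phi> n) = real n * \<mu> \<phi>"
proof -
  have inv: "\<mu> (\<lambda>x. \<phi> ((\<alpha> ^^ k) x)) = \<mu> \<phi>" for k
  proof (induction k)
    case (Suc k)
    have "\<forall>f\<in>CX. \<mu> (\<lambda>x. f (\<alpha> x)) = \<mu> f" using assms(1) by (simp add: inv_states_def)
    from bspec[OF this CX_comp_funpow[OF assms(3,2), of k]] show ?case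
      using Suc.IH by (simp add: funpow_Suc_right del: funpow.simps)
  qed simp
  have "\<mu> (birkhoff_sum \<alpha> \<phi> n) = (\<Sum>k<n. \<mu> (\<lambda>x. \<phi> ((\<alpha> ^^ k) x)))"
    unfolding birkhoff_sum_def
    by (intro pos_lin_fun_sum[OF inv_states_pos_lin_fun[OF assms(1)]] CX_comp_funpow[OF assms(3,2)]) simp
  then show ?thesis by (simp add: inv)
qed

subsection \<open>Fine partitions of unity\<close>

lemma hat_functions_sum:
  fixes t :: real
  assumes "\<bar>t\<bar> \<le> of_int K"
  shows "(\<Sum>i\<in>{-K-1..K+1}. max 0 (1 - \<bar>t - of_int i\<bar>)) = 1"
proof -
  define k where "k = \<lfloor>t\<rfloor>"
  have kt: "of_int k \<le> t" "t < of_int k + 1" unfolding k_def by linarith+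
  have sub: "{k, k + 1} \<subseteq> {-K-1..K+1}" using kt assms by auto
  have "(\<Sum>i\<in>{-K-1..K+1}. max 0 (1 - \<bar>t - of_int i\<bar>)) = (\<Sum>i\<in>{k, k + 1}. max 0 (1 - \<bar>t - of_int i\<bar>))"
  proof (rule sum.mono_neutral_right[OF _ sub], simp, rule ballI)
    fix i assume "i \<in> {-K-1..K+1} - {k, k + 1}"
    then have "i \<le> k - 1 \<or> i \<ge> k + 2" by auto
    then have "of_int i \<le> of_int k - (1::real) \<or> of_int i \<ge> of_int k + (2::real)" by linarith
    then show "max 0 (1 - \<bar>t - of_int i\<bar>) = 0" using kt by auto
  qed
  also have "\<dots> = 1" using kt by auto
  finally show ?thesis .
qed

lemma partition_of_unity_of_family:
  fixes g :: "'i \<Rightarrow> ('a::topological_space \<Rightarrow> real)"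
  assumes "finite I" "\<forall>i\<in>I. g i \<in> CX" "\<forall>i\<in>I. \<forall>x. g i x \<ge> 0" "\<forall>x. (\<Sum>i\<in>I. g i x) = 1"
    and "\<forall>i\<in>I. P (g i)" "\<And>d c. P d \<Longrightarrow> c > 0 \<Longrightarrow> P (\<lambda>x. c * d x)"
  shows "\<exists>D\<in>partitions_of_unity. \<forall>d\<in>D. P d"
  using assms(1-5)
proof (induction "card I" arbitrary: I g rule: less_induct)
  case less
  show ?case
  proof (cases "inj_on g I")
    case True
    then have "g ` I \<in> partitions_of_unity"
      using less.prems(1-4) by (auto simp: partitions_of_unity_def sum.reindex)
    then show ?thesis using less.prems(5) by blast
  next
    case False
    \<comment> \<open>merge two equal members \<open>g i = g j\<close> into \<open>2 g i\<close>\<close>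
    then obtain i j where ij: "i \<in> I" "j \<in> I" "i \<noteq> j" "g i = g j" unfolding inj_on_def by blast
    define g' where "g' = g(i := (\<lambda>x. 2 * g i x))"
    have sum: "(\<Sum>k\<in>I - {j}. g' k x) = (\<Sum>k\<in>I. g k x)" for x
    proof -
      have "(\<Sum>k\<in>I - {j}. g' k x) = g' i x + (\<Sum>k\<in>I - {j} - {i}. g k x)"
        using less.prems(1) ij by (simp add: sum.remove[of _ i] g'_def)
      also have "\<dots> = (\<Sum>k\<in>I. g k x)"
        using less.prems(1) ij
        by (simp add: g'_def sum.remove[of I j] sum.remove[of "I - {j}" i] insert_Diff_if)
      finally show ?thesis .
    qed
    show ?thesis
    proof (rule less.hyps[of "I - {j}" g'])
      show "card (I - {j}) < card I" by (rule card_Diff1_less[OF less.prems(1) ij(2)])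
    qed (use less.prems ij sum assms(6) in \<open>auto simp: g'_def intro: CX_cmult\<close>)
  qed
qed

lemma exists_fine_partition_of_unity:
  fixes S :: "'a::topological_space \<Rightarrow> real"
  assumes "compact (UNIV :: 'a set)" "S \<in> CX" "\<delta> > 0"
  shows "\<exists>D\<in>partitions_of_unity. \<forall>d\<in>D. \<exists>c. \<forall>x. 0 < d x \<longrightarrow> \<bar>S x - c\<bar> \<le> \<delta>"
proof -
  define K where "K = \<lceil>sup_norm S / \<delta>\<rceil>"
  have bound: "\<bar>S x / \<delta>\<bar> \<le> of_int K" for x
  proof -
    have "\<bar>S x / \<delta>\<bar> \<le> sup_norm S / \<delta>"
      using sup_norm_upper[OF assms(1,2)] assms(3) by (simp add: abs_divide divide_right_mono)
    then show ?thesis unfolding K_def by linarith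
  qed
  define g where "g i x = max 0 (1 - \<bar>S x / \<delta> - of_int i\<bar>)" for i :: int and x
  have near: "\<bar>S x - of_int i * \<delta>\<bar> \<le> \<delta>" if "0 < g i x" for i x
  proof -
    have "\<bar>S x - of_int i * \<delta>\<bar> = \<delta> * \<bar>S x / \<delta> - of_int i\<bar>"
      using assms(3) by (simp add: field_simps abs_mult[symmetric])
    also have "\<dots> \<le> \<delta>" using that assms(3) by (simp add: g_def mult_le_cancel_left1)
    finally show ?thesis .
  qed
  show ?thesis
  proof (rule partition_of_unity_of_family[of "{-K-1..K+1}" g])
    show "\<forall>i\<in>{-K-1..K+1}. g i \<in> CX"
      using assms(2,3) by (auto simp: g_def CX_def intro!: continuous_intros)
    show "\<forall>x. (\<Sum>i\<in>{-K-1..K+1}. g i x) = 1"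
      unfolding g_def using hat_functions_sum[OF bound] by blast
    show "\<forall>i\<in>{-K-1..K+1}. \<exists>c. \<forall>x. 0 < g i x \<longrightarrow> \<bar>S x - c\<bar> \<le> \<delta>"
      using near by blast
  qed (auto simp: g_def zero_less_mult_iff)
qed

subsection \<open>Gibbs' inequality\<close>

lemma pos_lin_fun_le_partition:
  assumes "pos_lin_fun \<psi>" "D \<in> partitions_of_unity" "f \<in> CX"
    and "\<And>d x. d \<in> D \<Longrightarrow> 0 < d x \<Longrightarrow> f x \<le> b d"
  shows "\<psi> f \<le> (\<Sum>d\<in>D. b d * \<psi> d)"
proof -
  have D: "finite D" "\<And>d. d \<in> D \<Longrightarrow> d \<in> CX" "\<And>d x. d \<in> D \<Longrightarrow> d x \<ge> 0" "\<And>x. (\<Sum>d\<in>D. d x) = 1"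
    using assms(2) unfolding partitions_of_unity_def by auto
  have "\<psi> f = \<psi> (\<lambda>x. \<Sum>d\<in>D. f x * d x)" by (simp add: D(4) flip: sum_distrib_left)
  also have "\<dots> = (\<Sum>d\<in>D. \<psi> (\<lambda>x. f x * d x))"
    using D(2) assms(3) by (intro pos_lin_fun_sum[OF assms(1) D(1)] CX_mult)
  also have "\<dots> \<le> (\<Sum>d\<in>D. \<psi> (\<lambda>x. b d * d x))"
  proof (intro sum_mono pos_lin_fun_mono[OF assms(1)] CX_const CX_mult assms(3) D(2))
    fix d x assume "d \<in> D"
    then show "f x * d x \<le> b d * d x"
      using assms(4) D(3) by (cases "d x > 0") (auto intro: mult_right_mono simp: order_le_less)
  qed
  also have "\<dots> = (\<Sum>d\<in>D. b d * \<psi> d)" by (simp add: pos_lin_fun_cmult[OF assms(1) D(2)])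
  finally show ?thesis .
qed

lemma pos_lin_fun_ge_partition:
  assumes "pos_lin_fun \<psi>" "D \<in> partitions_of_unity" "f \<in> CX"
    and "\<And>d x. d \<in> D \<Longrightarrow> 0 < d x \<Longrightarrow> b d \<le> f x"
  shows "(\<Sum>d\<in>D. b d * \<psi> d) \<le> \<psi> f"
proof -
  have "(\<lambda>x. - f x) \<in> CX" using CX_cmult[OF assms(3), of "-1"] by simp
  then have "\<psi> (\<lambda>x. - f x) \<le> (\<Sum>d\<in>D. - b d * \<psi> d)"
    using assms(4) by (intro pos_lin_fun_le_partition[OF assms(1,2)]) fastforce+
  then show ?thesis by (simp add: pos_lin_fun_minus[OF assms(1,3)] sum_negf)
qed

lemma state_sum_partition:
  assumes "m \<in> states" "D \<in> partitions_of_unity"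
  shows "(\<Sum>d\<in>D. m d) = 1"
proof -
  have "m (\<lambda>x. \<Sum>d\<in>D. d x) = (\<Sum>d\<in>D. m d)"
    using assms(2) by (intro pos_lin_fun_sum[OF states_pos_lin_fun[OF assms(1)]])
      (auto simp: partitions_of_unity_def)
  moreover have "(\<lambda>x. \<Sum>d\<in>D. d x) = one_fun"
    using assms(2) by (auto simp: partitions_of_unity_def one_fun_def)
  ultimately show ?thesis using assms(1) by (simp add: states_def)
qed

lemma gibbs_inequality:
  fixes w u :: "'i \<Rightarrow> real"
  assumes "finite P" "\<And>d. d \<in> P \<Longrightarrow> 0 < w d" "\<And>d. d \<in> P \<Longrightarrow> 0 < u d" "(\<Sum>d\<in>P. w d) = 1"
  shows "(\<Sum>d\<in>P. w d * ln (u d / w d)) \<le> ln (\<Sum>d\<in>P. u d)"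
proof -
  define U where "U = (\<Sum>d\<in>P. u d)"
  have "P \<noteq> {}" using assms(4) by auto
  then have U: "U > 0" unfolding U_def using assms(1,3) by (intro sum_pos) auto
  have "w d * (ln (u d / w d) - ln U) \<le> u d / U - w d" if "d \<in> P" for d
  proof -
    have "ln (u d / w d) - ln U = ln (u d / (w d * U))"
      using assms(2,3)[OF that] U by (simp add: ln_div ln_mult)
    also have "\<dots> \<le> u d / (w d * U) - 1"
      using assms(2,3)[OF that] U by (intro ln_le_minus_one) simp
    finally show ?thesis
      using assms(2)[OF that] mult_left_mono[of _ _ "w d"] by (fastforce simp: field_simps)
  qed
  then have "(\<Sum>d\<in>P. w d * (ln (u d / w d) - ln U)) \<le> (\<Sum>d\<in>P. u d / U - w d)"
    by (rule sum_mono)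
  also have "\<dots> = 0" using assms(4) U by (simp add: sum_subtractf U_def flip: sum_divide_distrib)
  finally show ?thesis
    using assms(4) by (simp add: U_def sum_subtractf right_diff_distrib flip: sum_distrib_right)
qed

lemma lnE_mono: "x \<le> y \<Longrightarrow> lnE x \<le> lnE y"
  by (simp add: lnE_def)

lemma gibbs_inequality_lnE:
  fixes w v k :: "'i \<Rightarrow> real"
  assumes "finite D" "\<And>d. d \<in> D \<Longrightarrow> 0 \<le> w d" "\<And>d. d \<in> D \<Longrightarrow> 0 \<le> v d" "(\<Sum>d\<in>D. w d) = 1"
  shows "ereal (\<Sum>d\<in>D. w d * k d) + (\<Sum>d\<in>D. if w d = 0 then 0 else ereal (w d) * lnE (v d / w d))
    \<le> lnE (\<Sum>d\<in>D. exp (k d) * v d)"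
proof -
  define P where "P = {d\<in>D. w d \<noteq> 0}"
  have P: "finite P" "P \<subseteq> D" "\<And>d. d \<in> P \<Longrightarrow> 0 < w d"
    using assms(1,2) by (auto simp: P_def order_le_less)
  have to_P: "(\<Sum>d\<in>D. f d) = (\<Sum>d\<in>P. f d)" if "\<And>d. d \<in> D \<Longrightarrow> w d = 0 \<Longrightarrow> f d = 0"
    for f :: "_ \<Rightarrow> 'b::comm_monoid_add"
    using that by (intro sum.mono_neutral_right[OF assms(1) P(2)]) (auto simp: P_def)
  show ?thesis
  proof (cases "\<exists>d\<in>P. v d = 0")
    case True
    then obtain d where d: "d \<in> P" "v d = 0" by blast
    define T where "T e = (if w e = 0 then 0 else ereal (w e) * lnE (v e / w e))" for e
    have "T e \<noteq> \<infinity>" if "e \<in> D" for e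
      using assms(2)[OF that] by (simp add: T_def lnE_def)
    then have rest: "(\<Sum>e\<in>D - {d}. T e) \<noteq> \<infinity>" by (simp add: sum_Pinfty)
    have "T d = -\<infinity>" using d P(3)[OF d(1)] by (simp add: T_def lnE_def)
    moreover have "d \<in> D" using d P(2) by blast
    ultimately have "(\<Sum>e\<in>D. T e) = -\<infinity>" using rest by (simp add: sum.remove[OF assms(1)])
    then show ?thesis by (simp add: T_def)
  next
    case False
    then have v: "\<And>d. d \<in> P \<Longrightarrow> 0 < v d"
      using assms(3) P(2) by (force simp: order_le_less)
    define u where "u d = exp (k d) * v d" for d
    have T: "(\<Sum>d\<in>D. if w d = 0 then 0 else ereal (w d) * lnE (v d / w d))
        = ereal (\<Sum>d\<in>P. w d * ln (v d / w d))"
      using P v by (subst to_P) (auto simp: lnE_def simp flip: sum_ereal intro!: sum.cong)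
    have "(\<Sum>d\<in>D. w d * k d) + (\<Sum>d\<in>P. w d * ln (v d / w d))
        = (\<Sum>d\<in>P. w d * ln (u d / w d))"
    proof -
      have "w d * k d + w d * ln (v d / w d) = w d * ln (u d / w d)" if "d \<in> P" for d
        using P(3)[OF that] v[OF that] by (simp add: u_def ln_div ln_mult algebra_simps)
      then show ?thesis by (simp add: to_P[of "\<lambda>d. w d * k d"] flip: sum.distrib)
    qed
    moreover have "(\<Sum>d\<in>P. w d * ln (u d / w d)) \<le> ln (\<Sum>d\<in>P. u d)"
      using P v assms(4) to_P[of w] by (intro gibbs_inequality) (auto simp: u_def)
    moreover have pos: "0 < (\<Sum>d\<in>P. u d)" "(\<Sum>d\<in>P. u d) \<le> (\<Sum>d\<in>D. u d)"
      using P v assms(1,3,4) to_P[of w] by (auto simp: u_def intro!: sum_pos sum_mono2)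
    moreover have "ln (\<Sum>d\<in>P. u d) \<le> ln (\<Sum>d\<in>D. u d)" using pos by simp
    ultimately have "(\<Sum>d\<in>D. w d * k d) + (\<Sum>d\<in>P. w d * ln (v d / w d)) \<le> ln (\<Sum>d\<in>D. u d)"
      by linarith
    then show ?thesis using pos by (simp add: T lnE_def u_def)
  qed
qed

lemma fine_partition_bound:
  fixes \<alpha> :: "'a::topological_space \<Rightarrow> 'a"
  assumes cpt: "compact (UNIV :: 'a set)" and \<alpha>: "continuous_on UNIV \<alpha>"
    and A: "transfer_op \<alpha> A" and \<phi>: "\<phi> \<in> CX" and \<mu>: "\<mu> \<in> inv_states \<alpha>"
    and D: "D \<in> partitions_of_unity"
    and fine: "\<forall>d\<in>D. \<exists>c. \<forall>x. 0 < d x \<longrightarrow> \<bar>birkhoff_sum \<alpha> \<phi> N x - c\<bar> \<le> \<delta>"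
    and m: "m \<in> states"
  shows "ereal (real N * \<mu> \<phi>) + (\<Sum>g\<in>D. if \<mu> g = 0 then 0 else ereal (\<mu> g) * lnE (m ((A ^^ N) g) / \<mu> g))
    \<le> lnE (sup_norm ((A_phi A \<phi> ^^ N) one_fun)) + ereal (2 * \<delta>)"
    (is "_ + ?T \<le> ?L + _")
proof -
  obtain c where c: "\<And>d x. d \<in> D \<Longrightarrow> 0 < d x \<Longrightarrow> \<bar>birkhoff_sum \<alpha> \<phi> N x - c d\<bar> \<le> \<delta>"
    using fine by metis
  have fin: "finite D" and CX: "\<And>d. d \<in> D \<Longrightarrow> d \<in> CX" and nonneg: "\<And>d x. d \<in> D \<Longrightarrow> 0 \<le> d x"
    using D by (auto simp: partitions_of_unity_def)
  have \<mu>_pos: "pos_lin_fun \<mu>" by (rule inv_states_pos_lin_fun[OF \<mu>])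
  have A_pos: "pos_lin_op (A ^^ N)" by (rule pos_lin_op_funpow[OF transfer_op_pos_lin_op[OF A]])
  have mA_pos: "pos_lin_fun (\<lambda>f. m ((A ^^ N) f))"
    by (rule pos_lin_fun_comp_pos_lin_op[OF A_pos states_pos_lin_fun[OF m]])
  have S: "birkhoff_sum \<alpha> \<phi> N \<in> CX" by (rule CX_birkhoff_sum[OF \<phi> \<alpha>])
  have "real N * \<mu> \<phi> \<le> (\<Sum>d\<in>D. (c d + \<delta>) * \<mu> d)"
    unfolding inv_state_birkhoff_sum[OF \<mu> \<alpha> \<phi>, symmetric]
    using c by (intro pos_lin_fun_le_partition[OF \<mu>_pos D S]) fastforce
  also have "\<dots> = (\<Sum>d\<in>D. \<mu> d * (c d - \<delta>)) + 2 * \<delta> * (\<Sum>d\<in>D. \<mu> d)"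
    unfolding sum_distrib_left sum.distrib[symmetric] by (rule sum.cong) (simp_all add: algebra_simps)
  also have "\<dots> = (\<Sum>d\<in>D. \<mu> d * (c d - \<delta>)) + 2 * \<delta>"
    using state_sum_partition[OF _ D, of \<mu>] \<mu> by (simp add: inv_states_def)
  finally have mean_upper: "ereal (real N * \<mu> \<phi>) \<le> ereal (\<Sum>d\<in>D. \<mu> d * (c d - \<delta>)) + ereal (2 * \<delta>)"
    by simp
  have "(\<Sum>d\<in>D. exp (c d - \<delta>) * m ((A ^^ N) d)) \<le> m ((A ^^ N) (\<lambda>x. exp (birkhoff_sum \<alpha> \<phi> N x)))"
    using c by (intro pos_lin_fun_ge_partition[OF mA_pos D CX_exp[OF S]]) fastforce
  also have "\<dots> = m ((A_phi A \<phi> ^^ N) one_fun)"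
    by (simp add: A_phi_funpow[OF A \<alpha> \<phi> CX_one]) (simp add: one_fun_def)
  also have "\<dots> \<le> sup_norm ((A_phi A \<phi> ^^ N) one_fun)"
    using pos_lin_op_A_phi[OF transfer_op_pos_lin_op[OF A] \<phi>]
    by (intro state_le_sup_norm[OF cpt _ m] pos_lin_op_CX[OF pos_lin_op_funpow CX_one])
  finally have norm_lower:
    "(\<Sum>d\<in>D. exp (c d - \<delta>) * m ((A ^^ N) d)) \<le> sup_norm ((A_phi A \<phi> ^^ N) one_fun)" .
  have "ereal (\<Sum>d\<in>D. \<mu> d * (c d - \<delta>)) + ?T \<le> lnE (\<Sum>d\<in>D. exp (c d - \<delta>) * m ((A ^^ N) d))"
    using \<mu> state_sum_partition[OF _ D, of \<mu>] nonneg CX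
    by (intro gibbs_inequality_lnE fin pos_lin_fun_nonneg[OF \<mu>_pos] pos_lin_fun_nonneg[OF mA_pos])
      (auto simp: inv_states_def)
  also have "\<dots> \<le> ?L" by (rule lnE_mono[OF norm_lower])
  finally have gibbs: "ereal (\<Sum>d\<in>D. \<mu> d * (c d - \<delta>)) + ?T \<le> ?L" .
  have "ereal (real N * \<mu> \<phi>) + ?T \<le> ereal (\<Sum>d\<in>D. \<mu> d * (c d - \<delta>)) + ereal (2 * \<delta>) + ?T"
    by (rule add_right_mono[OF mean_upper])
  also have "\<dots> = ereal (\<Sum>d\<in>D. \<mu> d * (c d - \<delta>)) + ?T + ereal (2 * \<delta>)"
    by (simp only: ac_simps)
  also have "\<dots> \<le> ?L + ereal (2 * \<delta>)" by (rule add_right_mono[OF gibbs])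
  finally show ?thesis .
qed

lemma ereal_add_le_add_shift: "ereal x + y \<le> z + ereal e \<longleftrightarrow> y \<le> z + ereal (e - x)"
  by (cases y; cases z) auto

lemma tau_n_le:
  fixes \<alpha> :: "'a::topological_space \<Rightarrow> 'a"
  assumes cpt: "compact (UNIV :: 'a set)" and \<alpha>: "continuous_on UNIV \<alpha>"
    and A: "transfer_op \<alpha> A" and \<phi>: "\<phi> \<in> CX" and \<mu>: "\<mu> \<in> inv_states \<alpha>"
  shows "ereal (real N * \<mu> \<phi>) + tau_n A N \<mu> \<le> lnE (sup_norm ((A_phi A \<phi> ^^ N) one_fun))"
    (is "_ \<le> ?L")
proof (rule ereal_le_epsilon2)
  fix e :: real
  assume "0 < e"
  then have "0 < e / 2" by simp
  then obtain D where D: "D \<in> partitions_of_unity"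
    and fine: "\<forall>d\<in>D. \<exists>c. \<forall>x. 0 < d x \<longrightarrow> \<bar>birkhoff_sum \<alpha> \<phi> N x - c\<bar> \<le> e / 2"
    using exists_fine_partition_of_unity[OF cpt CX_birkhoff_sum[OF \<phi> \<alpha>, of N]] by blast
  have "tau_nD A N \<mu> D \<le> ?L + ereal (e - real N * \<mu> \<phi>)"
    unfolding tau_nD_def
    using fine_partition_bound[OF cpt \<alpha> A \<phi> \<mu> D fine]
    by (intro SUP_least) (simp add: ereal_add_le_add_shift)
  moreover have "tau_n A N \<mu> \<le> tau_nD A N \<mu> D" unfolding tau_n_def by (rule INF_lower[OF D])
  ultimately show "ereal (real N * \<mu> \<phi>) + tau_n A N \<mu> \<le> ?L + ereal e"
    by (simp add: ereal_add_le_add_shift)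
qed

lemma ereal_add_le_lnE_div:
  fixes t :: ereal
  assumes "ereal (real N * u) + t \<le> lnE a" "N \<ge> 1"
  shows "ereal u + t / ereal (real N) \<le> lnE a / ereal (real N)"
proof (cases "a > 0")
  case True
  then have a: "lnE a = ereal (ln a)" by (simp add: lnE_def)
  have N: "real N > 0" using assms(2) by simp
  show ?thesis
  proof (cases t)
    case (real t')
    then have "(real N * u + t') / real N \<le> ln a / real N"
      using assms(1) a N by (intro divide_right_mono) auto
    then show ?thesis using real a N by (simp add: add_divide_distrib)
  qed (use assms a in auto)
next
  case False
  then have "t = -\<infinity>" using assms(1) by (cases t) (auto simp: lnE_def)
  then show ?thesis using assms(2) by simp
qed

subsection \<open>Fekete's lemma\<close>

lemma subadditive_mult_add:
  fixes r :: "nat \<Rightarrow> real"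
  assumes "\<And>n m. r (n + m) \<le> r n + r m"
  shows "r (q * k + s) \<le> real q * r k + r s"
proof (induction q)
  case (Suc q)
  have "r (Suc q * k + s) \<le> r k + r (q * k + s)" using assms[of k "q * k + s"] by (simp add: add.assoc)
  then show ?case using Suc by (simp add: algebra_simps)
qed simp

lemma subadditive_quotient_bound:
  fixes r :: "nat \<Rightarrow> real"
  assumes "\<And>n m. r (n + m) \<le> r n + r m" "k \<ge> 1" "n \<ge> 1"
  shows "r n / real n \<le> r k / real k + (\<bar>r k\<bar> + (\<Sum>s<k. \<bar>r s\<bar>)) / real n"
proof -
  define q where "q = n div k"
  define s where "s = n mod k"
  have n: "n = q * k + s" and s: "s < k" using assms(2) by (simp_all add: q_def s_def)
  have k: "real k > 0" using assms(2) by simp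
  have "r n \<le> real q * r k + r s" unfolding n by (rule subadditive_mult_add[OF assms(1)])
  moreover have "real q * r k = real n * r k / real k - real s / real k * r k"
    using k by (simp add: n field_simps)
  moreover have "real s / real k * \<bar>r k\<bar> \<le> \<bar>r k\<bar>"
    using s k by (intro mult_left_le_one_le) auto
  moreover have "- (real s / real k * r k) \<le> real s / real k * \<bar>r k\<bar>"
    using abs_ge_minus_self[of "real s / real k * r k"] by (simp add: abs_mult)
  moreover have "\<bar>r s\<bar> \<le> (\<Sum>s<k. \<bar>r s\<bar>)"
    using s by (intro member_le_sum) auto
  ultimately have "r n \<le> real n * r k / real k + (\<bar>r k\<bar> + (\<Sum>s<k. \<bar>r s\<bar>))"
    using abs_ge_self[of "r s"] by argo
  then show ?thesis using assms(3) by (simp add: field_simps)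
qed

lemma fekete_subadditive:
  fixes r :: "nat \<Rightarrow> real"
  assumes sub: "\<And>n m. r (n + m) \<le> r n + r m"
  shows "(\<lambda>n. ereal (r n / real n)) \<longlonglongrightarrow> (INF k\<in>{1..}. ereal (r k / real k))"
proof -
  define L where "L = (INF k\<in>{1..}. ereal (r k / real k))"
  define y where "y n = ereal (r n / real n)" for n
  have "L \<le> Liminf sequentially y"
    by (rule Liminf_bounded) (auto simp: eventually_sequentially L_def y_def intro!: exI[of _ 1] INF_lower)
  moreover have "Limsup sequentially y \<le> L"
    unfolding L_def
  proof (rule INF_greatest)
    fix k :: nat
    assume "k \<in> {1..}"
    then have k: "k \<ge> 1" by simp
    define C where "C = \<bar>r k\<bar> + (\<Sum>s<k. \<bar>r s\<bar>)"
    show "Limsup sequentially y \<le> ereal (r k / real k)"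
    proof (rule ereal_le_epsilon2)
      fix \<epsilon> :: real
      assume \<epsilon>: "0 < \<epsilon>"
      have "y n \<le> ereal (r k / real k) + ereal \<epsilon>" if n: "n \<ge> nat \<lceil>C / \<epsilon>\<rceil> + 1" for n
      proof -
        have "C / \<epsilon> < real n" using n by linarith
        then have "C / real n \<le> \<epsilon>" using \<epsilon> n by (simp add: field_simps)
        moreover have "r n / real n \<le> r k / real k + C / real n"
          unfolding C_def using n by (intro subadditive_quotient_bound[OF sub k]) simp
        ultimately show ?thesis by (simp add: y_def)
      qed
      then show "Limsup sequentially y \<le> ereal (r k / real k) + ereal \<epsilon>"
        by (intro Limsup_bounded) (auto simp: eventually_sequentially)
    qed
  qed
  ultimately have "Liminf sequentially y = L" "Limsup sequentially y = L"
    using Liminf_le_Limsup[of sequentially y] by auto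
  then show ?thesis unfolding y_def L_def by (intro Liminf_eq_Limsup) auto
qed

lemma lim_lnE_submult_ge:
  fixes a :: "nat \<Rightarrow> real"
  assumes nonneg: "\<And>n. 0 \<le> a n" and submult: "\<And>n k. a (n + k) \<le> a n * a k"
    and bound: "\<And>N. N \<ge> 1 \<Longrightarrow> c \<le> lnE (a N) / ereal (real N)"
  shows "c \<le> lim (\<lambda>n. lnE (a n) / ereal (real n))"
proof (cases "\<exists>N\<ge>1. a N = 0")
  case True
  then obtain N where "N \<ge> 1" "a N = 0" by blast
  then show ?thesis using bound[of N] by (simp add: lnE_def)
next
  case False
  then have "0 < a n" if "n \<ge> 1" for n using nonneg[of n] that by force
  moreover from this[of 1] have "0 < a 0"
    using submult[of 1 0] nonneg[of 0] by (simp add: mult_le_cancel_left1)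
  ultimately have pos: "0 < a n" for n by (cases "n = 0") auto
  have "ln (a (n + k)) \<le> ln (a n) + ln (a k)" for n k
    using submult[of n k] pos[of n] pos[of k] pos[of "n + k"] by (simp add: ln_mult flip: ln_le_cancel_iff)
  from fekete_subadditive[of "\<lambda>n. ln (a n)", OF this]
  obtain L where L: "(\<lambda>n. ereal (ln (a n) / real n)) \<longlonglongrightarrow> L" by blast
  moreover have "eventually (\<lambda>n. ereal (ln (a n) / real n) = lnE (a n) / ereal (real n)) sequentially"
    using pos by (auto simp: eventually_sequentially lnE_def intro!: exI[of _ 1])
  ultimately have lim: "(\<lambda>n. lnE (a n) / ereal (real n)) \<longlonglongrightarrow> L"
    by (rule Lim_transform_eventually)
  then have "c \<le> L" by (rule Lim_bounded2[where N = 1]) (simp add: bound)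
  then show ?thesis by (simp add: limI[OF lim])
qed

theorem lemma1p11:
  fixes \<alpha> :: "'a::t2_space \<Rightarrow> 'a"
    and A :: "('a \<Rightarrow> real) \<Rightarrow> ('a \<Rightarrow> real)"
    and \<phi> :: "'a \<Rightarrow> real"
    and \<mu> :: "('a \<Rightarrow> real) \<Rightarrow> real"
  assumes "compact (UNIV :: 'a set)"
    and "continuous_on UNIV \<alpha>"
    and "transfer_op \<alpha> A"
    and "\<phi> \<in> CX"
    and "\<mu> \<in> inv_states \<alpha>"
  shows "press A \<phi> \<ge> ereal (\<mu> \<phi>) + tau A \<mu>"
proof -
  have B: "pos_lin_op (A_phi A \<phi>)" by (rule pos_lin_op_A_phi[OF transfer_op_pos_lin_op[OF assms(3)] assms(4)])
  show ?thesis
    unfolding press_def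
  proof (rule lim_lnE_submult_ge)
    fix n
    show "0 \<le> sup_norm ((A_phi A \<phi> ^^ n) one_fun)"
      by (rule order_trans[OF abs_ge_zero sup_norm_upper[OF assms(1) pos_lin_op_CX[OF pos_lin_op_funpow[OF B] CX_one]]])
  next
    fix n k
    show "sup_norm ((A_phi A \<phi> ^^ (n + k)) one_fun)
      \<le> sup_norm ((A_phi A \<phi> ^^ n) one_fun) * sup_norm ((A_phi A \<phi> ^^ k) one_fun)"
      by (rule sup_norm_funpow_submult[OF assms(1) B])
  next
    fix N :: nat
    assume N: "N \<ge> 1"
    then have "tau A \<mu> \<le> tau_n A N \<mu> / ereal (real N)" unfolding tau_def by (intro INF_lower) simp
    then have "ereal (\<mu> \<phi>) + tau A \<mu> \<le> ereal (\<mu> \<phi>) + tau_n A N \<mu> / ereal (real N)"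
      by (rule add_left_mono)
    also have "\<dots> \<le> lnE (sup_norm ((A_phi A \<phi> ^^ N) one_fun)) / ereal (real N)"
      by (rule ereal_add_le_lnE_div[OF tau_n_le[OF assms] N])
    finally show "ereal (\<mu> \<phi>) + tau A \<mu> \<le> lnE (sup_norm ((A_phi A \<phi> ^^ N) one_fun)) / ereal (real N)" .
  qed
qed

end
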